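(* Let $(X,\mu)$ be a non-atomic probability measure space equipped with a tree $\mathcal{T}$, with associated dyadic maximal operator $\mathcal{M}_{\mathcal{T}}$, and let $0<q<1$. Let $g:(0,1]\to\mathbb{R}^+$ be integrable and non-increasing with $\int_0^1\big(\frac1t\int_0^t g\big)^q dt<+\infty$. Let $\phi_n:X\to\mathbb{R}^+$ be measurable with $\phi_n^*=g$ for all $n$, and suppose $$\lim_n\int_X(\mathcal{M}_{\mathcal{T}}\phi_n)^q\,d\mu=\int_0^1\Big(\frac1t\int_0^t g\Big)^q dt.$$ Then for every $k\in(0,1]$, $$\lim_n\int_0^k\big[(\mathcal{M}_{\mathcal{T}}\phi_n)^*(t)\big]^q dt=\int_0^k\Big(\frac1t\int_0^t g\Big)^q dt.$$
   Context: A set $\mathcal{T}$ of measurable subsets of $X$ is a tree if: (i) $X\in\mathcal{T}$ and $\mu(I)>0$ for every $I\in\mathcal{T}$; (ii) for every $I\in\mathcal{T}$ there is a finite or countable set $C(I)\subseteq\mathcal{T}$ with at least two elements, consisting of pairwise disjoint subsets of $I$ whose union is $I$; (iii) $\mathcal{T}=\bigcup_{m\ge0}\mathcal{T}_{(m)}$ where $\mathcal{T}_{(0)}=\{X\}$ and $\mathcal{T}_{(m+1)}=\bigcup_{I\in\mathcal{T}_{(m)}}C(I)$; (iv) $\lim_{m\to\infty}\sup_{I\in\mathcal{T}_{(m)}}\mu(I)=0$. The dyadic maximal operator is $\mathcal{M}_{\mathcal{T}}\phi(x)=\sup\{\frac{1}{\mu(I)}\int_I|\phi|\,d\mu : x\in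 I\in\mathcal{T}\}$. The decreasing rearrangement of a measurable $\psi$ on $X$ is $\psi^*(t)=\sup_{e\subseteq X,\ \mu(e)=t}\ \inf_{x\in e}|\psi(x)|$ for $0<t\le1$. *)

theory Defs
  imports "HOL-Probability.Probability"
begin

definition nonatomic :: "'a measure \<Rightarrow> bool" where
  "nonatomic M \<longleftrightarrow> (\<forall>A\<in>sets M. measure M A > 0 \<longrightarrow>
     (\<exists>B\<in>sets M. B \<subseteq> A \<and> 0 < measure M B \<and> measure M B < measure M A))"

fun tree_level :: "('a set \<Rightarrow> 'a set set) \<Rightarrow> 'a set \<Rightarrow> nat \<Rightarrow> 'a set set" where
  "tree_level C X 0 = {X}"
| "tree_level C X (Suc m) = (\<Union>I\<in>tree_level C X m. C I)"

definition is_tree :: "'a measure \<Rightarrow> 'a set set \<Rightarrow> bool" where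
  "is_tree M T \<longleftrightarrow> (\<exists>C.
     space M \<in> T \<and> (\<forall>I\<in>T. I \<in> sets M \<and> measure M I > 0)
   \<and> (\<forall>I\<in>T. C I \<subseteq> T \<and> countable (C I) \<and> (\<exists>J1\<in>C I. \<exists>J2\<in>C I. J1 \<noteq> J2)
        \<and> (\<forall>J1\<in>C I. \<forall>J2\<in>C I. J1 \<noteq> J2 \<longrightarrow> J1 \<inter> J2 = {})
        \<and> (\<forall>J\<in>C I. J \<subseteq> I) \<and> \<Union>(C I) = I)
   \<and> T = (\<Union>m. tree_level C (space M) m)
   \<and> (\<lambda>m. SUP I\<in>tree_level C (space M) m. measure M I) \<longlonglongrightarrow> 0)"

definition maxop :: "'a measure \<Rightarrow> 'a set set \<Rightarrow> ('a \<Rightarrow> real) \<Rightarrow> 'a \<Rightarrow> ennreal" where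
  "maxop M T \<phi> x = (SUP I\<in>{I\<in>T. x \<in> I}.
      (set_nn_integral M I (\<lambda>y. ennreal \<bar>\<phi> y\<bar>)) / emeasure M I)"

text \<open>Decreasing rearrangement of a [0,\<infinity>]-valued function (meaningful for 0<t\<le>1).\<close>
definition rearr :: "'a measure \<Rightarrow> ('a \<Rightarrow> ennreal) \<Rightarrow> real \<Rightarrow> ennreal" where
  "rearr M \<psi> t = (SUP e\<in>{e\<in>sets M. measure M e = t}. INF x\<in>e. \<psi> x)"

definition epow :: "real \<Rightarrow> ennreal \<Rightarrow> ennreal" where
  "epow q x = (if x = \<infinity> then \<infinity> else ennreal (enn2real x powr q))"

definition hardy :: "(real \<Rightarrow> real) \<Rightarrow> real \<Rightarrow> real" where
  "hardy g t = (LBINT s:{0<..t}. g s) / t"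

end

theory Submission
  imports Defs
begin

(*
  The decreasing rearrangement R_n of M_T phi_n is dominated by the Hardy average
  A(t) = (1/t) int_0^t g: if R_n(t) > a > A(t), the superlevel set E = {M_T phi_n > a} has
  measure c >= t, and the weak type estimate a mu(E) <= int_E phi_n <= int_0^c g of the maximal
  operator gives a <= A(c) <= A(t). By the layer cake formula, int_X (M_T phi_n)^q <= int_0^1 R_n^q,
  so these integrals tend to the integral of their integrable majorant A^q. Since on (k,1] they
  can only fall short of the majorant's integral, they converge on (0,k] as well.
*)

section \<open>Nonatomic measures\<close>

context finite_measure
begin

lemma nonatomic_exists_subset_le_pow2:
  assumes "nonatomic M" and A: "A \<in> sets M" "measure M A > 0"
  shows "\<exists>B\<in>sets M. B \<subseteq> A \<and> 0 < measure M B \<and> measure M B \<le> measure M A / 2^n"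
proof (induction n)
  case 0
  then show ?case using A by auto
next
  case (Suc n)
  then obtain B where B: "B \<in> sets M" "B \<subseteq> A" "0 < measure M B" "measure M B \<le> measure M A / 2^n"
    by auto
  then obtain C where C: "C \<in> sets M" "C \<subseteq> B" "0 < measure M C" "measure M C < measure M B"
    using \<open>nonatomic M\<close> unfolding nonatomic_def by blast
  show ?case
  proof (cases "measure M C \<le> measure M B / 2")
    case True
    then show ?thesis using B C by (intro bexI[of _ C]) auto
  next
    case False
    have "measure M (B - C) = measure M B - measure M C"
      using finite_measure_Diff B C by auto
    then show ?thesis using B C False by (intro bexI[of _ "B - C"]) auto
  qed
qed

lemma nonatomic_exists_small_subset:
  assumes "nonatomic M" and A: "A \<in> sets M" "measure M A > 0" and "e > 0"
  shows "\<exists>B\<in>sets M. B \<subseteq> A \<and> 0 < measure M B \<and> measure M B \<le> e"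
proof -
  obtain n :: nat where "measure M A / e < n" using reals_Archimedean2 by blast
  also have "real n < 2^n" using less_exp[of n] by (metis of_nat_less_iff of_nat_numeral of_nat_power)
  finally have "measure M A / 2^n < e" using \<open>e > 0\<close> by (simp add: field_simps)
  moreover obtain B where "B \<in> sets M" "B \<subseteq> A" "0 < measure M B" "measure M B \<le> measure M A / 2^n"
    using nonatomic_exists_subset_le_pow2[OF assms(1-3), of n] by blast
  ultimately show ?thesis by (intro bexI[of _ B]) auto
qed

lemma exists_subset_measure_ge_half_sup:
  assumes "0 \<le> r"
  shows "\<exists>C\<in>sets M. C \<subseteq> R \<and> measure M C \<le> r
    \<and> (\<forall>D\<in>sets M. D \<subseteq> R \<longrightarrow> measure M D \<le> r \<longrightarrow> measure M D \<le> 2 * measure M C)"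
proof -
  define S where "S = {measure M C | C. C \<in> sets M \<and> C \<subseteq> R \<and> measure M C \<le> r}"
  have "bdd_above S"
    unfolding S_def by (intro bdd_aboveI[of _ "measure M (space M)"]) (auto intro: bounded_measure)
  have le_Sup: "measure M D \<le> Sup S" if "D \<in> sets M" "D \<subseteq> R" "measure M D \<le> r" for D
    using that \<open>bdd_above S\<close> unfolding S_def by (intro cSup_upper) auto
  show ?thesis
  proof (cases "Sup S \<le> 0")
    case True
    have "measure M D \<le> 2 * measure M {}" if "D \<in> sets M" "D \<subseteq> R" "measure M D \<le> r" for D
      using le_Sup[OF that] True by simp
    then show ?thesis using assms by (intro bexI[of _ "{}"]) auto
  next
    case False
    have "0 \<in> S" unfolding S_def using assms by (intro CollectI exI[of _ "{}"]) auto
    moreover have "Sup S / 2 < Sup S" using False by auto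
    ultimately obtain x where "x \<in> S" "Sup S / 2 < x"
      using less_cSup_iff[OF _ \<open>bdd_above S\<close>] by blast
    then obtain C where C: "C \<in> sets M" "C \<subseteq> R" "measure M C \<le> r" "Sup S / 2 < measure M C"
      unfolding S_def by blast
    have "measure M D \<le> 2 * measure M C" if "D \<in> sets M" "D \<subseteq> R" "measure M D \<le> r" for D
      using le_Sup[OF that] C(4) by linarith
    then show ?thesis using C(1-3) by (intro bexI[of _ C]) auto
  qed
qed

text \<open>Greedy exhaustion: keep adding a subset of the rest of \<open>A\<close> that realises at least half of
  the largest admissible measure. The added measures tend to \<open>0\<close>, so a positive deficit would
  leave room for a small admissible piece exceeding twice the late choices.\<close>
lemma nonatomic_exists_subset_measure:
  assumes na: "nonatomic M" and A: "A \<in> sets M" and t: "0 \<le> t" "t \<le> measure M A"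
  shows "\<exists>B\<in>sets M. B \<subseteq> A \<and> measure M B = t"
proof -
  define P where "P B C \<longleftrightarrow> C \<in> sets M \<and> C \<subseteq> A - B \<and> measure M C \<le> t - measure M B
    \<and> (\<forall>D\<in>sets M. D \<subseteq> A - B \<longrightarrow> measure M D \<le> t - measure M B \<longrightarrow> measure M D \<le> 2 * measure M C)"
    for B C
  have P_some: "P B (SOME C. P B C)" if "measure M B \<le> t" for B
  proof (rule someI_ex)
    have "0 \<le> t - measure M B" using that by simp
    from exists_subset_measure_ge_half_sup[OF this, of "A - B"] show "\<exists>C. P B C"
      unfolding P_def by blast
  qed
  define Bs where "Bs n = ((\<lambda>B. B \<union> (SOME C. P B C)) ^^ n) {}" for n
  define C where "C n = (SOME C. P (Bs n) C)" for n
  have Bs_Suc: "Bs (Suc n) = Bs n \<union> C n" for n by (simp add: Bs_def C_def)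
  have measure_Suc: "measure M (Bs (Suc n)) = measure M (Bs n) + measure M (C n)"
    if "Bs n \<in> sets M" "P (Bs n) (C n)" for n
    unfolding Bs_Suc using that by (intro finite_measure_Union) (auto simp: P_def)
  have inv: "Bs n \<in> sets M \<and> Bs n \<subseteq> A \<and> measure M (Bs n) \<le> t" for n
  proof (induction n)
    case 0
    then show ?case using t by (simp add: Bs_def)
  next
    case (Suc n)
    then have "P (Bs n) (C n)" unfolding C_def by (intro P_some) auto
    then show ?case using Suc measure_Suc[of n] unfolding Bs_Suc P_def by auto
  qed
  have PC: "P (Bs n) (C n)" for n unfolding C_def using inv by (intro P_some) auto
  define B where "B = (\<Union>n. Bs n)"
  have "range Bs \<subseteq> sets M" using inv by blast
  then have B: "B \<in> sets M" "B \<subseteq> A" unfolding B_def using inv by blast+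
  have lim: "(\<lambda>n. measure M (Bs n)) \<longlonglongrightarrow> measure M B"
    unfolding B_def using inv by (intro finite_Lim_measure_incseq) (auto simp: incseq_Suc_iff Bs_Suc)
  have "measure M B \<le> t" using inv by (intro LIMSEQ_le_const2[OF lim]) auto
  have "(\<lambda>n. measure M (Bs (Suc n)) - measure M (Bs n)) \<longlonglongrightarrow> measure M B - measure M B"
    by (intro tendsto_diff LIMSEQ_Suc lim)
  then have C_lim: "(\<lambda>n. 2 * measure M (C n)) \<longlonglongrightarrow> 0"
    using tendsto_mult_right_zero[of _ sequentially 2] by (simp add: measure_Suc inv PC)
  have "measure M B = t"
  proof (rule ccontr)
    assume "measure M B \<noteq> t"
    with \<open>measure M B \<le> t\<close> have "measure M B < t" by auto
    moreover have "measure M (A - B) = measure M A - measure M B"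
      using finite_measure_Diff A B by auto
    ultimately obtain D where D: "D \<in> sets M" "D \<subseteq> A - B" "0 < measure M D" "measure M D \<le> t - measure M B"
      using nonatomic_exists_small_subset[OF na, of "A - B" "t - measure M B"] A B t by auto
    have "measure M D \<le> 2 * measure M (C n)" for n
    proof -
      have "measure M (Bs n) \<le> measure M B" using B unfolding B_def by (intro finite_measure_mono) auto
      moreover have "D \<subseteq> A - Bs n" using D(2) unfolding B_def by blast
      ultimately show ?thesis using PC[of n] D(1,4) unfolding P_def by auto
    qed
    then have "measure M D \<le> 0" using LIMSEQ_le_const[OF C_lim] by blast
    then show False using D by linarith
  qed
  then show ?thesis using B by blast
qed

end

section \<open>Trees and the dyadic maximal operator\<close>

lemma is_tree_sets: "is_tree M T \<Longrightarrow> I \<in> T \<Longrightarrow> I \<in> sets M"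
  and is_tree_measure_pos: "is_tree M T \<Longrightarrow> I \<in> T \<Longrightarrow> 0 < measure M I"
  unfolding is_tree_def by blast+

lemma tree_level_disjoint:
  assumes "\<And>m. tree_level C X m \<subseteq> T"
    and "\<And>I. I \<in> T \<Longrightarrow> disjoint (C I) \<and> (\<forall>J\<in>C I. J \<subseteq> I)"
  shows "disjoint (tree_level C X m)"
proof (induction m)
  case (Suc m)
  show ?case
  proof (rule pairwiseI)
    fix I J assume "I \<in> tree_level C X (Suc m)" "J \<in> tree_level C X (Suc m)" "I \<noteq> J"
    then obtain I' J' where I': "I' \<in> tree_level C X m" "I \<in> C I'"
      and J': "J' \<in> tree_level C X m" "J \<in> C J'" by auto
    have C': "disjoint (C I') \<and> (\<forall>J\<in>C I'. J \<subseteq> I')" "disjoint (C J') \<and> (\<forall>J\<in>C J'. J \<subseteq> J')"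
      using assms I'(1) J'(1) by blast+
    show "disjnt I J"
    proof (cases "I' = J'")
      case True
      then show ?thesis using C' I' J' \<open>I \<noteq> J\<close> by (auto simp: pairwise_def)
    next
      case False
      then have "disjnt I' J'" using Suc.IH I'(1) J'(1) by (auto simp: pairwise_def)
      moreover have "I \<subseteq> I'" "J \<subseteq> J'" using C' I'(2) J'(2) by auto
      ultimately show ?thesis by (auto simp: disjnt_def)
    qed
  qed
qed simp

lemma tree_level_ancestor:
  assumes "\<And>m. tree_level C X m \<subseteq> T" and "\<And>I J. I \<in> T \<Longrightarrow> J \<in> C I \<Longrightarrow> J \<subseteq> I"
    and "m \<le> n" "J \<in> tree_level C X n"
  shows "\<exists>K\<in>tree_level C X m. J \<subseteq> K"
  using assms(3,4)
proof (induction n arbitrary: J)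
  case (Suc n)
  show ?case
  proof (cases "m = Suc n")
    case False
    from Suc.prems obtain I where I: "I \<in> tree_level C X n" "J \<in> C I" by auto
    with False Suc.prems obtain K where "K \<in> tree_level C X m" "I \<subseteq> K" using Suc.IH by force
    then show ?thesis using assms(1,2) I by blast
  qed (use Suc.prems in blast)
qed auto

lemma is_tree_levels:
  assumes "is_tree M T"
  obtains L :: "nat \<Rightarrow> 'a set set" where "T = (\<Union>m. L m)" "\<And>m. countable (L m)" "\<And>m. disjoint (L m)"
    "\<And>m n J. m \<le> n \<Longrightarrow> J \<in> L n \<Longrightarrow> \<exists>K\<in>L m. J \<subseteq> K"
proof -
  obtain C where T: "T = (\<Union>m. tree_level C (space M) m)"
    and C: "\<And>I. I \<in> T \<Longrightarrow> C I \<subseteq> T \<and> countable (C I) \<and> disjoint (C I) \<and> (\<forall>J\<in>C I. J \<subseteq> I)"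
    using assms unfolding is_tree_def disjoint_def pairwise_def disjnt_def by metis
  have levels: "tree_level C (space M) m \<subseteq> T" for m using T by blast
  have "countable (tree_level C (space M) m)" for m
    by (induction m) (auto dest: subsetD[OF levels] C)
  moreover have "disjoint (tree_level C (space M) m)" for m
    by (rule tree_level_disjoint[OF levels]) (use C in blast)
  moreover have "\<exists>K\<in>tree_level C (space M) m. J \<subseteq> K"
    if "m \<le> n" "J \<in> tree_level C (space M) n" for m n J
    by (rule tree_level_ancestor[OF levels _ that]) (use C in blast)
  ultimately show thesis using that[OF T] by blast
qed

lemma is_tree_countable:
  assumes "is_tree M T"
  shows "countable T"
proof -
  obtain L :: "nat \<Rightarrow> 'a set set" where "T = (\<Union>m. L m)" "\<And>m. countable (L m)"
    using is_tree_levels[OF assms] by metis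
  then show ?thesis by auto
qed

lemma levels_disjoint_subcover:
  fixes L :: "nat \<Rightarrow> 'a set set"
  assumes disj: "\<And>m. disjoint (L m)" and anc: "\<And>m n J. m \<le> n \<Longrightarrow> J \<in> L n \<Longrightarrow> \<exists>K\<in>L m. J \<subseteq> K"
    and G: "G \<subseteq> (\<Union>m. L m)"
  obtains P where "P \<subseteq> G" "disjoint P" "\<Union>P = \<Union>G"
proof
  define top where "top m I \<longleftrightarrow> I \<in> L m \<and> I \<in> G \<and> (\<forall>m'<m. \<forall>K\<in>L m'. I \<subseteq> K \<longrightarrow> K \<notin> G)" for m I
  define P where "P = {I. \<exists>m. top m I}"
  show "P \<subseteq> G" unfolding P_def top_def by blast
  have disjnt_top: "disjnt I J" if I: "top m I" and J: "top n J" and "m \<le> n" and "I \<noteq> J" for m n I J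
  proof (rule ccontr)
    assume "\<not> disjnt I J"
    obtain K where K: "K \<in> L m" "J \<subseteq> K" using anc[OF \<open>m \<le> n\<close>] J unfolding top_def by blast
    with \<open>\<not> disjnt I J\<close> have "\<not> disjnt I K" by (auto simp: disjnt_def)
    then have "K = I" using disj[of m] K(1) I unfolding top_def pairwise_def by blast
    show False
    proof (cases "m = n")
      case True
      then show False using disj[of m] I J \<open>\<not> disjnt I J\<close> \<open>I \<noteq> J\<close> unfolding top_def pairwise_def by blast
    next
      case False
      with \<open>m \<le> n\<close> have "m < n" by simp
      then show False using J K \<open>K = I\<close> I unfolding top_def by blast
    qed
  qed
  show "disjoint P"
  proof (rule pairwiseI)
    fix I J assume "I \<in> P" "J \<in> P" "I \<noteq> J"
    then obtain m n where I: "top m I" and J: "top n J" unfolding P_def by blast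
    show "disjnt I J"
    proof (cases "m \<le> n")
      case True
      then show ?thesis using disjnt_top[OF I J] \<open>I \<noteq> J\<close> by blast
    next
      case False
      then show ?thesis using disjnt_top[OF J I] \<open>I \<noteq> J\<close> by (simp add: disjnt_sym)
    qed
  qed
  show "\<Union>P = \<Union>G"
  proof
    show "\<Union>G \<subseteq> \<Union>P"
    proof
      fix x assume "x \<in> \<Union>G"
      define Q where "Q m \<longleftrightarrow> (\<exists>J\<in>L m. x \<in> J \<and> J \<in> G)" for m
      have "\<exists>m. Q m" using \<open>x \<in> \<Union>G\<close> G unfolding Q_def by blast
      then have "Q (LEAST m. Q m)" by (rule LeastI_ex)
      then obtain J where J: "J \<in> L (LEAST m. Q m)" "x \<in> J" "J \<in> G" unfolding Q_def by blast
      have "top (LEAST m. Q m) J"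
        unfolding top_def using J not_less_Least unfolding Q_def by blast
      then show "x \<in> \<Union>P" using J(2) unfolding P_def by blast
    qed
  qed (use \<open>P \<subseteq> G\<close> in blast)
qed

lemma ennreal_mult_le_of_less_divide:
  fixes a b c :: ennreal
  assumes "a < b / c" "c \<noteq> 0" "c \<noteq> \<infinity>"
  shows "a * c \<le> b"
proof -
  have "a * c \<le> b / c * c" using assms(1) by (intro mult_right_mono) auto
  also have "\<dots> = b" using assms(2,3) by (simp add: ennreal_divide_times less_top[symmetric])
  finally show ?thesis .
qed

lemma maxop_eq_SUP_indicator:
  "maxop M T \<phi> x = (SUP I\<in>T. (\<integral>\<^sup>+y\<in>I. ennreal \<bar>\<phi> y\<bar> \<partial>M) / emeasure M I * indicator I x)"
  unfolding maxop_def
proof (rule antisym)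
  show "(SUP I\<in>{I \<in> T. x \<in> I}. (\<integral>\<^sup>+y\<in>I. ennreal \<bar>\<phi> y\<bar> \<partial>M) / emeasure M I)
    \<le> (SUP I\<in>T. (\<integral>\<^sup>+y\<in>I. ennreal \<bar>\<phi> y\<bar> \<partial>M) / emeasure M I * indicator I x)"
    by (intro SUP_least) (force intro: SUP_upper2)
  show "(SUP I\<in>T. (\<integral>\<^sup>+y\<in>I. ennreal \<bar>\<phi> y\<bar> \<partial>M) / emeasure M I * indicator I x)
    \<le> (SUP I\<in>{I \<in> T. x \<in> I}. (\<integral>\<^sup>+y\<in>I. ennreal \<bar>\<phi> y\<bar> \<partial>M) / emeasure M I)"
    by (intro SUP_least) (auto simp: indicator_def intro: SUP_upper)
qed

lemma borel_measurable_maxop [measurable]: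
  assumes "is_tree M T" and [measurable]: "\<phi> \<in> borel_measurable M"
  shows "maxop M T \<phi> \<in> borel_measurable M"
proof -
  have [measurable]: "I \<in> sets M" if "I \<in> T" for I using is_tree_sets assms(1) that .
  show ?thesis
    unfolding maxop_eq_SUP_indicator[abs_def]
    using is_tree_countable[OF assms(1)] by measurable
qed

text \<open>The superlevel set is the disjoint union of the maximal tree sets on which the average of
  \<open>|\<phi>|\<close> exceeds \<open>\<alpha>\<close>.\<close>
lemma maxop_weak_type:
  fixes \<phi> :: "'a \<Rightarrow> real" and \<alpha> :: real
  assumes tree: "is_tree M T" and [measurable]: "\<phi> \<in> borel_measurable M"
  defines "E \<equiv> {x\<in>space M. ennreal \<alpha> < maxop M T \<phi> x}"
  shows "E \<in> sets M" and "ennreal \<alpha> * emeasure M E \<le> (\<integral>\<^sup>+x\<in>E. ennreal \<bar>\<phi> x\<bar> \<partial>M)"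
proof -
  define N where "N = density M (\<lambda>x. ennreal \<bar>\<phi> x\<bar>)"
  define G where "G = {I\<in>T. ennreal \<alpha> < emeasure N I / emeasure M I}"
  have T_sets: "I \<in> sets M" if "I \<in> T" for I using is_tree_sets tree that .
  have N_eq: "emeasure N I = (\<integral>\<^sup>+y\<in>I. ennreal \<bar>\<phi> y\<bar> \<partial>M)" if "I \<in> sets M" for I
    unfolding N_def using that by (intro emeasure_density) auto
  have "E = \<Union>G"
    using T_sets sets.sets_into_space
    unfolding E_def G_def maxop_def less_SUP_iff by (auto simp: N_eq)
  obtain L :: "nat \<Rightarrow> 'a set set" where L: "T = (\<Union>m. L m)" "\<And>m. disjoint (L m)" "\<And>m n J. m \<le> n \<Longrightarrow> J \<in> L n \<Longrightarrow> \<exists>K\<in>L m. J \<subseteq> K"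
    using is_tree_levels[OF tree] by metis
  then obtain P where P: "P \<subseteq> G" "disjoint P" "\<Union>P = \<Union>G"
    using levels_disjoint_subcover[of L G] unfolding G_def by blast
  have P_T: "P \<subseteq> T" using P(1) unfolding G_def by blast
  then have "countable P" using countable_subset is_tree_countable[OF tree] by blast
  have disj: "disjoint_family_on id P" using P(2) by (auto simp: disjoint_family_on_def pairwise_def disjnt_def)
  have E_eq: "E = \<Union>(id ` P)" using \<open>E = \<Union>G\<close> P(3) by simp
  show "E \<in> sets M" unfolding E_eq using \<open>countable P\<close> P_T T_sets by (intro sets.countable_UN') auto
  have "ennreal \<alpha> * emeasure M E = (\<integral>\<^sup>+I. ennreal \<alpha> * emeasure M I \<partial>count_space P)"
    unfolding E_eq using \<open>countable P\<close> P_T T_sets disj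
    by (subst emeasure_UN_countable) (auto simp: nn_integral_cmult)
  also have "\<dots> \<le> (\<integral>\<^sup>+I. emeasure N I \<partial>count_space P)"
  proof (rule nn_integral_mono)
    fix I assume "I \<in> space (count_space P)"
    then have "I \<in> G" "0 < measure M I" using P(1) P_T is_tree_measure_pos[OF tree] by auto
    then show "ennreal \<alpha> * emeasure M I \<le> emeasure N I"
      unfolding G_def measure_def by (intro ennreal_mult_le_of_less_divide) auto
  qed
  also have "\<dots> = emeasure N E"
    unfolding E_eq using \<open>countable P\<close> P_T T_sets disj
    by (subst emeasure_UN_countable) (auto simp: N_def)
  finally show "ennreal \<alpha> * emeasure M E \<le> (\<integral>\<^sup>+x\<in>E. ennreal \<bar>\<phi> x\<bar> \<partial>M)"
    using N_eq \<open>E \<in> sets M\<close> by simp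
qed

section \<open>Decreasing rearrangements\<close>

lemma emeasure_lborel_ennreal_below:
  fixes a :: ennreal
  shows "emeasure lborel {s::real. 0 \<le> s \<and> ennreal s < a} = a"
proof (cases a rule: ennreal_cases)
  case (real r)
  then have "{s::real. 0 \<le> s \<and> ennreal s < a} = {0..<r}"
    by (auto simp: ennreal_less_iff)
  then show ?thesis using real by simp
next
  case top
  have "of_nat n \<le> emeasure lborel {s::real. 0 \<le> s \<and> ennreal s < a}" for n
  proof -
    have "emeasure lborel {0..<real n} \<le> emeasure lborel {s::real. 0 \<le> s \<and> ennreal s < a}"
      using top by (intro emeasure_mono) auto
    then show ?thesis by (simp add: ennreal_of_nat_eq_real_of_nat)
  qed
  then show ?thesis
    using top ennreal_Ex_less_of_nat less_top not_le by metis
qed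

lemma nn_integral_layer_cake:
  fixes G :: "'a \<Rightarrow> ennreal"
  assumes "sigma_finite_measure M" and [measurable]: "G \<in> borel_measurable M"
  shows "(\<integral>\<^sup>+x. G x \<partial>M) = (\<integral>\<^sup>+s\<in>{0..}. emeasure M {x\<in>space M. ennreal s < G x} \<partial>lborel)"
proof -
  interpret sigma_finite_measure M by fact
  interpret P: pair_sigma_finite M lborel
    by (intro pair_sigma_finite.intro assms(1) lborel.sigma_finite_measure_axioms)
  define f where "f x s = (indicator {s. 0 \<le> s \<and> ennreal s < G x} s :: ennreal)" for x s
  have "(\<integral>\<^sup>+x. G x \<partial>M) = (\<integral>\<^sup>+x. (\<integral>\<^sup>+s. f x s \<partial>lborel) \<partial>M)"
    unfolding f_def by (subst nn_integral_indicator) (simp_all add: emeasure_lborel_ennreal_below)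
  also have "\<dots> = (\<integral>\<^sup>+s. (\<integral>\<^sup>+x. f x s \<partial>M) \<partial>lborel)"
  proof -
    have "case_prod f \<in> borel_measurable (M \<Otimes>\<^sub>M lborel)" unfolding f_def by measurable
    then show ?thesis by (rule P.Fubini'[symmetric])
  qed
  also have "\<dots> = (\<integral>\<^sup>+s\<in>{0..}. emeasure M {x\<in>space M. ennreal s < G x} \<partial>lborel)"
  proof (intro nn_integral_cong)
    fix s :: real
    have "(\<integral>\<^sup>+x. f x s \<partial>M) = (\<integral>\<^sup>+x. indicator {x\<in>space M. ennreal s < G x} x * indicator {0..} s \<partial>M)"
      unfolding f_def by (intro nn_integral_cong) (auto simp: indicator_def)
    then show "(\<integral>\<^sup>+x. f x s \<partial>M) = emeasure M {x\<in>space M. ennreal s < G x} * indicator {0..} s"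
      by (simp add: nn_integral_multc)
  qed
  finally show ?thesis .
qed

lemma superlevel_eq_UN_shift:
  fixes G :: "'a \<Rightarrow> ennreal"
  assumes "0 \<le> s"
  shows "{x\<in>X. ennreal s < G x} = (\<Union>n. {x\<in>X. ennreal (s + 1 / Suc n) < G x})"
proof
  show "(\<Union>n. {x\<in>X. ennreal (s + 1 / Suc n) < G x}) \<subseteq> {x\<in>X. ennreal s < G x}"
  proof
    fix x assume "x \<in> (\<Union>n. {x\<in>X. ennreal (s + 1 / Suc n) < G x})"
    then obtain n where "x \<in> X" "ennreal (s + 1 / Suc n) < G x" by blast
    moreover have "ennreal s \<le> ennreal (s + 1 / Suc n)" by (intro ennreal_leI) simp
    ultimately show "x \<in> {x\<in>X. ennreal s < G x}" by auto
  qed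
  show "{x\<in>X. ennreal s < G x} \<subseteq> (\<Union>n. {x\<in>X. ennreal (s + 1 / Suc n) < G x})"
  proof
    fix x assume x: "x \<in> {x\<in>X. ennreal s < G x}"
    show "x \<in> (\<Union>n. {x\<in>X. ennreal (s + 1 / Suc n) < G x})"
    proof (cases "G x" rule: ennreal_cases)
      case (real r)
      with x assms have "s < r" by (auto simp: ennreal_less_iff)
      then obtain n :: nat where "1 / Suc n < r - s"
        using reals_Archimedean[of "r - s"] by (auto simp: inverse_eq_divide)
      then have "ennreal (s + 1 / Suc n) < G x"
        using real assms by (subst real, subst ennreal_less_iff) auto
      then show ?thesis using x by blast
    qed (use x in auto)
  qed
qed

context finite_measure
begin

lemma rearr_ge_INF: "e \<in> sets M \<Longrightarrow> measure M e = t \<Longrightarrow> (INF x\<in>e. G x) \<le> rearr M G t"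
  unfolding rearr_def by (intro SUP_upper) auto

lemma rearr_gt_imp_exists:
  assumes "c < rearr M G t"
  shows "\<exists>e\<in>sets M. measure M e = t \<and> (\<forall>x\<in>e. c < G x)"
  using assms unfolding rearr_def less_SUP_iff by (auto dest: less_INF_D)

lemma rearr_cong:
  assumes "\<And>x. x \<in> space M \<Longrightarrow> G x = G' x"
  shows "rearr M G t = rearr M G' t"
  unfolding rearr_def using assms sets.sets_into_space by (intro SUP_cong INF_cong) blast+

lemma rearr_antimono:
  assumes "nonatomic M" and "0 \<le> t" "t \<le> t'"
  shows "rearr M G t' \<le> rearr M G t"
  unfolding rearr_def
proof (intro SUP_least)
  fix e assume "e \<in> {e \<in> sets M. measure M e = t'}"
  then obtain e' where e': "e' \<in> sets M" "e' \<subseteq> e" "measure M e' = t"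
    using nonatomic_exists_subset_measure[OF assms(1), of e t] assms(2,3) by auto
  then have "(INF x\<in>e. G x) \<le> (INF x\<in>e'. G x)" by (intro INF_superset_mono) auto
  also have "\<dots> \<le> rearr M G t" using e' by (intro rearr_ge_INF)
  finally show "(INF x\<in>e. G x) \<le> (SUP e\<in>{e \<in> sets M. measure M e = t}. INF x\<in>e. G x)"
    unfolding rearr_def .
qed

lemma superlevel_measure_gt_shift:
  assumes [measurable]: "G \<in> borel_measurable M" and "0 \<le> s"
    and "t < measure M {x\<in>space M. ennreal s < G x}"
  shows "\<exists>a>s. t < measure M {x\<in>space M. ennreal a < G x}"
proof -
  define S where "S n = {x\<in>space M. ennreal (s + 1 / Suc n) < G x}" for n :: nat
  have "incseq S"
  proof (rule incseq_SucI)
    fix n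
    have "ennreal (s + 1 / Suc (Suc n)) \<le> ennreal (s + 1 / Suc n)"
      by (intro ennreal_leI add_left_mono) (simp add: frac_le)
    then show "S n \<subseteq> S (Suc n)" unfolding S_def by (auto intro: le_less_trans)
  qed
  moreover have "(\<Union>n. S n) = {x\<in>space M. ennreal s < G x}"
    unfolding S_def by (rule superlevel_eq_UN_shift[OF \<open>0 \<le> s\<close>, symmetric])
  moreover have "(\<lambda>n. measure M (S n)) \<longlonglongrightarrow> measure M (\<Union>n. S n)"
  proof (rule finite_Lim_measure_incseq)
    show "range S \<subseteq> sets M" unfolding S_def by auto
  qed fact
  ultimately have "eventually (\<lambda>n. t < measure M (S n)) sequentially"
    using assms(3) by (auto intro: order_tendstoD)
  then obtain n where "t < measure M (S n)" by (auto simp: eventually_sequentially)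
  then show ?thesis unfolding S_def by (intro exI[of _ "s + 1 / Suc n"]) auto
qed

lemma rearr_gt_of_superlevel:
  assumes "nonatomic M" and [measurable]: "G \<in> borel_measurable M" and "0 \<le> t" "0 \<le> s"
    and "t < measure M {x\<in>space M. ennreal s < G x}"
  shows "ennreal s < rearr M G t"
proof -
  obtain a where "s < a" and a: "t < measure M {x\<in>space M. ennreal a < G x}"
    using superlevel_measure_gt_shift assms(2,4,5) by blast
  have "{x\<in>space M. ennreal a < G x} \<in> sets M" by measurable
  then obtain e where e: "e \<in> sets M" "e \<subseteq> {x\<in>space M. ennreal a < G x}" "measure M e = t"
    using nonatomic_exists_subset_measure[OF assms(1) _ \<open>0 \<le> t\<close> less_imp_le[OF a]] by blast
  have "ennreal s < ennreal a" using \<open>s < a\<close> \<open>0 \<le> s\<close> by (simp add: ennreal_less_iff)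
  also have "\<dots> \<le> (INF x\<in>e. G x)" using e(2) by (intro INF_greatest) (auto intro: less_imp_le)
  also have "\<dots> \<le> rearr M G t" using e by (intro rearr_ge_INF)
  finally show ?thesis .
qed

lemma emeasure_superlevel_le_by_rearr:
  fixes G :: "'a \<Rightarrow> ennreal" and h :: "real \<Rightarrow> ennreal"
  assumes na: "nonatomic M" and [measurable]: "G \<in> borel_measurable M" "A \<in> sets M"
    and "measure M A \<le> c" and [measurable]: "(\<lambda>t. h t * indicator {0<..c} t) \<in> borel_measurable borel"
    and h: "\<And>t. 0 < t \<Longrightarrow> t < c \<Longrightarrow> rearr M G t \<le> h t" and "0 \<le> s"
  shows "emeasure M {x\<in>space M. ennreal s < G x * indicator A x}
    \<le> emeasure lborel {t\<in>space lborel. ennreal s < h t * indicator {0<..c} t}"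
proof -
  define m where "m = measure M {x\<in>A. ennreal s < G x}"
  have A_space: "A \<subseteq> space M" using sets.sets_into_space assms(3) by blast
  then have "{x\<in>space M. ennreal s < G x * indicator A x} = {x\<in>A. ennreal s < G x}"
    by (auto simp: indicator_def)
  then have eq: "emeasure M {x\<in>space M. ennreal s < G x * indicator A x} = ennreal m"
    unfolding m_def by (simp add: emeasure_eq_measure)
  have "m \<le> measure M A" unfolding m_def by (intro finite_measure_mono) auto
  have "m \<le> measure M {x\<in>space M. ennreal s < G x}"
    unfolding m_def using A_space by (intro finite_measure_mono) auto
  have "{0<..<m} \<subseteq> {t\<in>space lborel. ennreal s < h t * indicator {0<..c} t}"
  proof
    fix t assume t: "t \<in> {0<..<m}"
    have "ennreal s < rearr M G t"
      using t \<open>0 \<le> s\<close> \<open>m \<le> measure M {x\<in>space M. ennreal s < G x}\<close>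
      by (intro rearr_gt_of_superlevel[OF na]) auto
    also have "\<dots> \<le> h t" using t \<open>m \<le> measure M A\<close> \<open>measure M A \<le> c\<close> by (intro h) auto
    finally show "t \<in> {t\<in>space lborel. ennreal s < h t * indicator {0<..c} t}"
      using t \<open>m \<le> measure M A\<close> \<open>measure M A \<le> c\<close> by auto
  qed
  then have "emeasure lborel {0<..<m} \<le> emeasure lborel {t\<in>space lborel. ennreal s < h t * indicator {0<..c} t}"
    by (intro emeasure_mono) measurable
  then show ?thesis using eq \<open>m \<le> measure M A\<close> unfolding m_def by simp
qed

text \<open>Integrate the comparison of distribution functions over the levels (layer cake).\<close>
lemma set_nn_integral_le_by_rearr:
  fixes G :: "'a \<Rightarrow> ennreal" and h :: "real \<Rightarrow> ennreal"
  assumes "nonatomic M" and [measurable]: "G \<in> borel_measurable M" "A \<in> sets M"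
    and "measure M A \<le> c" and [measurable]: "(\<lambda>t. h t * indicator {0<..c} t) \<in> borel_measurable borel"
    and "\<And>t. 0 < t \<Longrightarrow> t < c \<Longrightarrow> rearr M G t \<le> h t"
  shows "(\<integral>\<^sup>+x\<in>A. G x \<partial>M) \<le> (\<integral>\<^sup>+t\<in>{0<..c}. h t \<partial>lborel)"
proof -
  have "(\<integral>\<^sup>+x\<in>A. G x \<partial>M)
      = (\<integral>\<^sup>+s\<in>{0..}. emeasure M {x\<in>space M. ennreal s < G x * indicator A x} \<partial>lborel)"
    by (rule nn_integral_layer_cake[OF sigma_finite_measure_axioms]) measurable
  also have "\<dots> \<le> (\<integral>\<^sup>+s\<in>{0..}. emeasure lborel {t\<in>space lborel. ennreal s < h t * indicator {0<..c} t} \<partial>lborel)"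
    using emeasure_superlevel_le_by_rearr[OF assms] by (intro nn_integral_mono) (simp add: indicator_def)
  also have "\<dots> = (\<integral>\<^sup>+t\<in>{0<..c}. h t \<partial>lborel)"
    by (rule nn_integral_layer_cake[OF lborel.sigma_finite_measure_axioms, symmetric]) measurable
  finally show ?thesis .
qed

end

section \<open>Powers, Hardy averages and the squeeze\<close>

lemma epow_ennreal: "0 \<le> r \<Longrightarrow> epow q (ennreal r) = ennreal (r powr q)"
  by (simp add: epow_def)

lemma epow_mono:
  assumes "0 < q" and "x \<le> y"
  shows "epow q x \<le> epow q y"
proof (cases "y = \<infinity>")
  case False
  with assms(2) have "x \<noteq> \<infinity>" "enn2real x \<le> enn2real y"
    using enn2real_mono[of x y] by (auto simp: top_unique less_top)
  then show ?thesis using False assms(1) unfolding epow_def by (auto intro!: ennreal_leI powr_mono2)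
qed (simp add: epow_def)

lemma borel_measurable_epow [measurable]:
  assumes [measurable]: "f \<in> borel_measurable M"
  shows "(\<lambda>x. epow q (f x)) \<in> borel_measurable M"
  unfolding epow_def by measurable

lemma ennreal_powr_inverse_le_of_less_epow:
  assumes "0 < q" and "0 \<le> a" and "ennreal a < epow q y"
  shows "ennreal (a powr (1/q)) \<le> y"
proof (cases y rule: ennreal_cases)
  case (real r)
  with assms have "a < r powr q" by (simp add: epow_def ennreal_less_iff)
  then have "a powr (1/q) \<le> (r powr q) powr (1/q)" using assms(1,2) by (intro powr_mono2) auto
  also have "\<dots> = r" using real assms(1) by (simp add: powr_powr)
  finally show ?thesis using real by (simp add: ennreal_leI)
qed simp

lemma rearr_epow_le:
  assumes "0 < q"
  shows "rearr M (\<lambda>x. epow q (G x)) t \<le> epow q (rearr M G t)"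
  unfolding rearr_def
proof (intro SUP_least)
  fix e assume e: "e \<in> {e \<in> sets M. measure M e = t}"
  show "(INF x\<in>e. epow q (G x)) \<le> epow q (SUP e\<in>{e \<in> sets M. measure M e = t}. INF x\<in>e. G x)"
  proof (rule dense_le)
    fix c assume c: "c < (INF x\<in>e. epow q (G x))"
    then obtain a where a: "c = ennreal a" "0 \<le> a"
      by (cases c rule: ennreal_cases) (auto simp: top_unique)
    have "ennreal (a powr (1/q)) \<le> (INF x\<in>e. G x)"
      using c a assms by (auto intro!: INF_greatest ennreal_powr_inverse_le_of_less_epow dest: less_INF_D)
    also have "\<dots> \<le> (SUP e\<in>{e \<in> sets M. measure M e = t}. INF x\<in>e. G x)"
      using e by (intro SUP_upper)
    finally have "epow q (ennreal (a powr (1/q))) \<le> epow q (SUP e\<in>{e \<in> sets M. measure M e = t}. INF x\<in>e. G x)"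
      by (rule epow_mono[OF assms])
    then show "c \<le> epow q (SUP e\<in>{e \<in> sets M. measure M e = t}. INF x\<in>e. G x)"
      using a assms by (simp add: epow_ennreal powr_powr)
  qed
qed

lemma borel_measurable_antimono_on_ennreal:
  fixes f :: "real \<Rightarrow> ennreal"
  assumes "A \<in> sets borel" and mono: "\<And>s t. s \<in> A \<Longrightarrow> t \<in> A \<Longrightarrow> s \<le> t \<Longrightarrow> f t \<le> f s"
    and fin: "\<And>t. t \<in> A \<Longrightarrow> f t < \<infinity>"
  shows "(\<lambda>t. f t * indicator A t) \<in> borel_measurable borel"
proof -
  have "mono_on A (\<lambda>t. - enn2real (f t))"
    using mono fin by (intro mono_onI) (auto intro!: enn2real_mono)
  then have "(\<lambda>t. - (- enn2real (f t))) \<in> borel_measurable (restrict_space borel A)"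
    by (intro borel_measurable_uminus borel_measurable_mono_on_fnc)
  then have "(\<lambda>t. ennreal (enn2real (f t))) \<in> borel_measurable (restrict_space borel A)"
    by (intro measurable_compose[OF _ measurable_ennreal]) simp
  then have "(\<lambda>t. ennreal (enn2real (f t)) * indicator A t) \<in> borel_measurable borel"
    using assms(1) by (subst (asm) borel_measurable_restrict_space_iff_ennreal) auto
  also have "(\<lambda>t. ennreal (enn2real (f t)) * indicator A t) = (\<lambda>t. f t * indicator A t)"
    using fin by (auto simp: indicator_def fun_eq_iff less_top)
  finally show ?thesis .
qed

lemma (in finite_measure) borel_measurable_epow_rearr:
  assumes "nonatomic M" and "0 < q" and fin: "\<And>t. t \<in> {0<..1} \<Longrightarrow> rearr M F t < \<infinity>"
  shows "(\<lambda>t. epow q (rearr M F t) * indicator {0<..1} t) \<in> borel_measurable borel"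
proof (rule borel_measurable_antimono_on_ennreal)
  show "epow q (rearr M F t) \<le> epow q (rearr M F s)" if "s \<in> {0<..1}" "t \<in> {0<..1}" "s \<le> t" for s t
    using that by (intro epow_mono[OF \<open>0 < q\<close>] rearr_antimono[OF \<open>nonatomic M\<close>]) auto
  show "epow q (rearr M F t) < \<infinity>" if "t \<in> {0<..1}" for t
    using fin[OF that] by (simp add: epow_def)
qed simp

locale decreasing_profile =
  fixes g :: "real \<Rightarrow> real"
  assumes nonneg: "\<And>t. t \<in> {0<..1} \<Longrightarrow> g t \<ge> 0"
    and integrable: "set_integrable lborel {0<..1} g"
    and antimono: "\<And>s t. 0 < s \<Longrightarrow> s \<le> t \<Longrightarrow> t \<le> 1 \<Longrightarrow> g t \<le> g s"
begin

lemma set_integrable_subinterval: "0 \<le> a \<Longrightarrow> b \<le> 1 \<Longrightarrow> set_integrable lborel {a<..b} g"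
  by (rule set_integrable_subset[OF integrable]) auto

lemma hardy_nonneg: "0 < c \<Longrightarrow> c \<le> 1 \<Longrightarrow> 0 \<le> hardy g c"
  unfolding hardy_def set_lebesgue_integral_def
  using nonneg by (intro divide_nonneg_pos integral_nonneg_AE AE_I2) (auto simp: indicator_def)

lemma nn_integral_eq_hardy:
  assumes "0 < c" "c \<le> 1"
  shows "(\<integral>\<^sup>+t\<in>{0<..c}. ennreal (g t) \<partial>lborel) = ennreal (c * hardy g c)"
proof -
  have "(\<integral>\<^sup>+t\<in>{0<..c}. ennreal (g t) \<partial>lborel) = (\<integral>\<^sup>+t. ennreal (indicator {0<..c} t *\<^sub>R g t) \<partial>lborel)"
    by (intro nn_integral_cong) (simp add: indicator_def)
  also have "\<dots> = ennreal (LBINT t:{0<..c}. g t)"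
    unfolding set_lebesgue_integral_def
    using set_integrable_subinterval[of 0 c] assms nonneg unfolding set_integrable_def
    by (intro nn_integral_eq_integral) (auto simp: indicator_def)
  also have "(LBINT t:{0<..c}. g t) = c * hardy g c" unfolding hardy_def using assms by simp
  finally show ?thesis .
qed

text \<open>Splitting \<open>(0,s] = (0,t] \<union> (t,s]\<close>, the integral over \<open>(t,s]\<close> is at most \<open>(s-t) g(t)\<close>, and
  \<open>t g(t)\<close> is at most the integral over \<open>(0,t]\<close>.\<close>
lemma hardy_antimono:
  assumes "0 < t" "t \<le> s" "s \<le> 1"
  shows "hardy g s \<le> hardy g t"
proof -
  define I where "I x = (LBINT u:{0<..x}. g u)" for x
  have fin: "emeasure lborel {a<..b} \<noteq> \<infinity>" for a b :: real by (cases "a \<le> b") auto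
  have const: "(LBINT u:{a<..b}. g t) = (b - a) * g t" if "a \<le> b" for a b
    using set_integral_const[of "{a<..b}" lborel "g t"] fin[of a b] that by simp
  have split: "I s = I t + (LBINT u:{t<..s}. g u)"
  proof -
    have "{0<..s} = {0<..t} \<union> {t<..s}" using assms by auto
    then show ?thesis unfolding I_def using assms
      by (simp add: set_integral_Un set_integrable_subinterval)
  qed
  have "(LBINT u:{t<..s}. g u) \<le> (LBINT u:{t<..s}. g t)"
    using assms set_integrable_subinterval[of t s] fin antimono
    by (intro set_integral_mono) (auto simp: set_integrable_def less_top)
  then have upper: "(LBINT u:{t<..s}. g u) \<le> (s - t) * g t" using const assms by simp
  have "(LBINT u:{0<..t}. g t) \<le> (LBINT u:{0<..t}. g u)"
    using assms set_integrable_subinterval[of 0 t] fin antimono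
    by (intro set_integral_mono) (auto simp: set_integrable_def less_top)
  then have lower: "t * g t \<le> I t" using const assms unfolding I_def by simp
  have "t * I s = t * I t + t * (LBINT u:{t<..s}. g u)" unfolding split by (simp add: algebra_simps)
  also have "\<dots> \<le> t * I t + (s - t) * (t * g t)"
    using upper assms by (simp add: mult_left_mono mult.left_commute)
  also have "\<dots> \<le> t * I t + (s - t) * I t" using lower assms by (intro add_left_mono mult_left_mono) auto
  also have "\<dots> = s * I t" by (simp add: algebra_simps)
  finally have "t * I s \<le> s * I t" .
  then show ?thesis unfolding hardy_def I_def[symmetric] using assms by (simp add: field_simps)
qed

end

text \<open>On \<open>B - A\<close> the integral of \<open>h n\<close> is at most that of \<open>H\<close>, so its deficit on \<open>A\<close> is at most
  the (vanishing) deficit on \<open>B\<close>.\<close>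
lemma tendsto_set_nn_integral_squeeze:
  fixes h :: "nat \<Rightarrow> 'a \<Rightarrow> ennreal" and H :: "'a \<Rightarrow> ennreal"
  assumes [measurable]: "\<And>n. (\<lambda>x. h n x * indicator B x) \<in> borel_measurable N"
    "(\<lambda>x. H x * indicator B x) \<in> borel_measurable N" "A \<in> sets N" "B \<in> sets N"
    and "A \<subseteq> B" and le: "\<And>n x. x \<in> B \<Longrightarrow> h n x \<le> H x"
    and fin: "(\<integral>\<^sup>+x\<in>B. H x \<partial>N) < \<infinity>"
    and lower: "\<And>n. P n \<le> (\<integral>\<^sup>+x\<in>B. h n x \<partial>N)" and lim: "P \<longlonglongrightarrow> (\<integral>\<^sup>+x\<in>B. H x \<partial>N)"
  shows "(\<lambda>n. \<integral>\<^sup>+x\<in>A. h n x \<partial>N) \<longlonglongrightarrow> (\<integral>\<^sup>+x\<in>A. H x \<partial>N)"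
proof -
  have split: "(\<integral>\<^sup>+x\<in>B. f x \<partial>N) = (\<integral>\<^sup>+x\<in>A. f x \<partial>N) + (\<integral>\<^sup>+x\<in>B - A. f x \<partial>N)"
    if [measurable]: "(\<lambda>x. f x * indicator B x) \<in> borel_measurable N" for f :: "'a \<Rightarrow> ennreal"
  proof -
    have "(\<lambda>x. f x * indicator A x) = (\<lambda>x. (f x * indicator B x) * indicator A x)"
      "(\<lambda>x. f x * indicator (B - A) x) = (\<lambda>x. (f x * indicator B x) * indicator (B - A) x)"
      using \<open>A \<subseteq> B\<close> by (auto simp: fun_eq_iff indicator_def)
    then have [measurable]: "(\<lambda>x. f x * indicator A x) \<in> borel_measurable N"
      "(\<lambda>x. f x * indicator (B - A) x) \<in> borel_measurable N" by simp_all
    have "(\<integral>\<^sup>+x\<in>B. f x \<partial>N) = (\<integral>\<^sup>+x. f x * indicator A x + f x * indicator (B - A) x \<partial>N)"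
      using \<open>A \<subseteq> B\<close> by (intro nn_integral_cong) (auto simp: indicator_def)
    then show ?thesis by (simp add: nn_integral_add)
  qed
  define a where "a = (\<integral>\<^sup>+x\<in>A. H x \<partial>N)"
  define b where "b = (\<integral>\<^sup>+x\<in>B - A. H x \<partial>N)"
  have "a + b < \<infinity>" using fin split[of H] unfolding a_def b_def by simp
  then have "b \<noteq> \<infinity>" by (auto simp: top_add)
  have upper: "(\<integral>\<^sup>+x\<in>A. h n x \<partial>N) \<le> a" for n
    unfolding a_def using \<open>A \<subseteq> B\<close> le by (intro nn_integral_mono) (auto simp: indicator_def)
  have "P n \<le> b + (\<integral>\<^sup>+x\<in>A. h n x \<partial>N)" for n
  proof -
    have "(\<integral>\<^sup>+x\<in>B - A. h n x \<partial>N) \<le> b"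
      unfolding b_def using le by (intro nn_integral_mono) (auto simp: indicator_def)
    then show ?thesis using lower[of n] split[of "h n"] by (simp add: add.commute add_right_mono order_trans)
  qed
  then have lower': "P n - b \<le> (\<integral>\<^sup>+x\<in>A. h n x \<partial>N)" for n
    using \<open>b \<noteq> \<infinity>\<close> by (simp add: ennreal_minus_le_iff)
  have "(\<lambda>n. P n - b) \<longlonglongrightarrow> (a + b) - b"
    using lim split[of H] \<open>a + b < \<infinity>\<close> \<open>b \<noteq> \<infinity>\<close> unfolding a_def b_def
    by (intro tendsto_diff_ennreal) (auto simp: less_top)
  then have "(\<lambda>n. P n - b) \<longlonglongrightarrow> a" using \<open>b \<noteq> \<infinity>\<close> by simp
  from tendsto_sandwich[OF _ _ this tendsto_const] show ?thesis
    unfolding a_def[symmetric] by (simp add: lower' upper)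
qed

context prob_space
begin

lemma rearr_maxop_le_hardy:
  assumes na: "nonatomic M" and tree: "is_tree M T" and [measurable]: "\<phi> \<in> borel_measurable M"
    and "\<And>x. x \<in> space M \<Longrightarrow> 0 \<le> \<phi> x" and "decreasing_profile g"
    and "\<And>t. t \<in> {0<..1} \<Longrightarrow> rearr M (\<lambda>x. ennreal (\<phi> x)) t = ennreal (g t)"
    and t: "0 < t" "t \<le> 1"
  shows "rearr M (maxop M T \<phi>) t \<le> ennreal (hardy g t)"
proof (rule ccontr)
  interpret decreasing_profile g by fact
  have rearr_\<phi>: "rearr M (\<lambda>x. ennreal \<bar>\<phi> x\<bar>) s = ennreal (g s)" if "s \<in> {0<..1}" for s
    using assms(4,6) that by (subst rearr_cong[of _ "\<lambda>x. ennreal (\<phi> x)"]) auto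
  assume "\<not> rearr M (maxop M T \<phi>) t \<le> ennreal (hardy g t)"
  then obtain z where z: "ennreal (hardy g t) < z" "z < rearr M (maxop M T \<phi>) t"
    using dense not_le by metis
  then obtain \<alpha> where "z = ennreal \<alpha>" "0 \<le> \<alpha>"
    by (cases z rule: ennreal_cases) (auto simp: top_unique)
  with z have \<alpha>: "hardy g t < \<alpha>" "ennreal \<alpha> < rearr M (maxop M T \<phi>) t"
    using hardy_nonneg t by (auto simp: ennreal_less_iff)
  define E where "E = {x\<in>space M. ennreal \<alpha> < maxop M T \<phi> x}"
  define c where "c = measure M E"
  have E: "E \<in> events" "ennreal \<alpha> * emeasure M E \<le> (\<integral>\<^sup>+x\<in>E. ennreal \<bar>\<phi> x\<bar> \<partial>M)"
    unfolding E_def using maxop_weak_type[OF tree] by auto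
  obtain e where e: "e \<in> events" "measure M e = t" "\<forall>x\<in>e. ennreal \<alpha> < maxop M T \<phi> x"
    using rearr_gt_imp_exists[OF \<alpha>(2)] by blast
  then have "e \<subseteq> E" unfolding E_def using sets.sets_into_space by blast
  then have "t \<le> c" unfolding c_def using finite_measure_mono[OF _ E(1)] e(2) by blast
  then have c: "t \<le> c" "0 < c" "c \<le> 1" using t unfolding c_def by auto
  have "(\<integral>\<^sup>+x\<in>E. ennreal \<bar>\<phi> x\<bar> \<partial>M) \<le> (\<integral>\<^sup>+s\<in>{0<..c}. ennreal (g s) \<partial>lborel)"
  proof (rule set_nn_integral_le_by_rearr[OF na _ E(1)])
    show "(\<lambda>s. ennreal (g s) * indicator {0<..c} s) \<in> borel_measurable borel"
      using c antimono by (intro borel_measurable_antimono_on_ennreal) (auto intro!: ennreal_leI)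
    show "rearr M (\<lambda>x. ennreal \<bar>\<phi> x\<bar>) s \<le> ennreal (g s)" if "0 < s" "s < c" for s
      using rearr_\<phi> that c by simp
  qed (auto simp: c_def)
  also have "\<dots> = ennreal (c * hardy g c)" using nn_integral_eq_hardy c by simp
  finally have "ennreal (\<alpha> * c) \<le> ennreal (c * hardy g c)"
    using E(2) \<open>0 \<le> \<alpha>\<close> by (simp add: emeasure_eq_measure c_def ennreal_mult)
  then have "\<alpha> \<le> hardy g c"
    using c hardy_nonneg[of c] by (simp add: mult.commute)
  also have "hardy g c \<le> hardy g t" using c t by (intro hardy_antimono) auto
  finally show False using \<alpha>(1) by simp
qed

lemma nn_integral_epow_le_rearr:
  fixes F :: "'a \<Rightarrow> ennreal"
  assumes "nonatomic M" and [measurable]: "F \<in> borel_measurable M" and "0 < q"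
    and "\<And>t. t \<in> {0<..1} \<Longrightarrow> rearr M F t < \<infinity>"
  shows "(\<integral>\<^sup>+x. epow q (F x) \<partial>M) \<le> (\<integral>\<^sup>+t\<in>{0<..1}. epow q (rearr M F t) \<partial>lborel)"
proof -
  have "(\<integral>\<^sup>+x. epow q (F x) \<partial>M) = (\<integral>\<^sup>+x\<in>space M. epow q (F x) \<partial>M)"
    by (intro nn_integral_cong) simp
  also have "\<dots> \<le> (\<integral>\<^sup>+t\<in>{0<..1}. epow q (rearr M F t) \<partial>lborel)"
    using assms rearr_epow_le borel_measurable_epow_rearr by (intro set_nn_integral_le_by_rearr) auto
  finally show ?thesis .
qed

end

theorem lemma6p2:
  fixes M :: "'a measure" and T :: "'a set set" and q :: real
    and g :: "real \<Rightarrow> real" and \<phi> :: "nat \<Rightarrow> 'a \<Rightarrow> real"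
  assumes "prob_space M" and "nonatomic M" and "is_tree M T"
    and "0 < q" and "q < 1"
    and "\<And>t. t \<in> {0<..1} \<Longrightarrow> g t \<ge> 0"
    and "set_integrable lborel {0<..1} g"
    and "\<And>s t. 0 < s \<Longrightarrow> s \<le> t \<Longrightarrow> t \<le> 1 \<Longrightarrow> g t \<le> g s"
    and "(\<integral>\<^sup>+ t\<in>{0<..1}. ennreal (hardy g t powr q) \<partial>lborel) < \<infinity>"
    and "\<And>n. \<phi> n \<in> borel_measurable M"
    and "\<And>n x. x \<in> space M \<Longrightarrow> \<phi> n x \<ge> 0"
    and "\<And>n t. t \<in> {0<..1} \<Longrightarrow> rearr M (\<lambda>x. ennreal (\<phi> n x)) t = ennreal (g t)"
    and "(\<lambda>n. \<integral>\<^sup>+ x. epow q (maxop M T (\<phi> n) x) \<partial>M)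
           \<longlonglongrightarrow> (\<integral>\<^sup>+ t\<in>{0<..1}. ennreal (hardy g t powr q) \<partial>lborel)"
  shows "\<forall>k\<in>{0<..1}.
     (\<lambda>n. \<integral>\<^sup>+ t\<in>{0<..k}. epow q (rearr M (maxop M T (\<phi> n)) t) \<partial>lborel)
       \<longlonglongrightarrow> (\<integral>\<^sup>+ t\<in>{0<..k}. ennreal (hardy g t powr q) \<partial>lborel)"
proof
  interpret prob_space M by fact
  interpret decreasing_profile g using assms(6-8) by unfold_locales
  fix k :: real assume "k \<in> {0<..1}"
  define h where "h n t = epow q (rearr M (maxop M T (\<phi> n)) t)" for n t
  define H where "H t = ennreal (hardy g t powr q)" for t
  have rearr_le: "rearr M (maxop M T (\<phi> n)) t \<le> ennreal (hardy g t)" if "t \<in> {0<..1}" for n t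
    using that assms(2,3,10-12) by (intro rearr_maxop_le_hardy) (auto intro: decreasing_profile_axioms)
  have h_le_H: "h n t \<le> H t" if "t \<in> {0<..1}" for n t
    using epow_mono[OF assms(4) rearr_le[OF that, of n]] hardy_nonneg that
    by (simp add: h_def H_def epow_ennreal)
  have rearr_fin: "rearr M (maxop M T (\<phi> n)) t < \<infinity>" if "t \<in> {0<..1}" for n t
    using rearr_le[OF that, of n] by (simp add: le_less_trans)
  have H_meas: "(\<lambda>t. H t * indicator {0<..1} t) \<in> borel_measurable borel"
    unfolding H_def using hardy_antimono hardy_nonneg assms(4)
    by (intro borel_measurable_antimono_on_ennreal) (auto intro!: powr_mono2)
  show "(\<lambda>n. \<integral>\<^sup>+t\<in>{0<..k}. h n t \<partial>lborel) \<longlonglongrightarrow> (\<integral>\<^sup>+t\<in>{0<..k}. H t \<partial>lborel)"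
  proof (rule tendsto_set_nn_integral_squeeze[where B="{0<..1}"])
    show "(\<integral>\<^sup>+x. epow q (maxop M T (\<phi> n) x) \<partial>M) \<le> (\<integral>\<^sup>+t\<in>{0<..1}. h n t \<partial>lborel)" for n
      unfolding h_def using assms(2-4,10) rearr_fin by (intro nn_integral_epow_le_rearr) auto
    show "(\<lambda>t. h n t * indicator {0<..1} t) \<in> borel_measurable lborel" for n
      unfolding h_def measurable_lborel2 using assms(2,4) rearr_fin
      by (intro borel_measurable_epow_rearr) auto
  qed (use assms(9,13) H_meas h_le_H \<open>k \<in> {0<..1}\<close> in \<open>auto simp: H_def\<close>)
qed

end
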